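(* For any $\alpha_1\in[0,1]$, the function $\gamma\mapsto\mathcal P(\alpha_1,\gamma)$ is continuous and non-increasing on $[0,1)$. Moreover, if $\mathbf P\big(f_2(X)\le\varepsilon f_1(X)\big)>0$ for every $\varepsilon>0$, then $\lim_{\gamma\to1^-}\mathcal P(\alpha_1,\gamma)=0$.
   Context: Setup. $(\mathcal X,\mathcal U)$ is a measurable space with a $\sigma$-finite measure $\mu$; $P_1\neq P_2$ are probability measures with densities $f_1,f_2$ w.r.t. $\mu$; $p_1,p_2>0$, $p_1+p_2=1$; $\mathbf P(Y=i)=p_i$ and given $Y=i$, $X\sim P_i$; $\mathbf P_i$ denotes probability when $X\sim P_i$. A classifier is a measurable $\tilde Y(X,U)\in\{0,1,2\}$ with $U\sim\mathrm{Unif}[0,1]$ independent of $(X,Y)$; $0$ means indecision. For $\alpha_1\in[0,1]$, $\gamma\in[0,1)$: $\mathcal P(\alpha_1,\gamma):=\inf_{\tilde Y}\frac{\mathbf P_2(\tilde Y=1)}{1-\gamma}$ over all classifiers with $\mathbf P(\tilde Y=0)=\gamma$ and $\mathbf P_1(\tilde Y=2)=\alpha_1(1-\gamma)$. *)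

theory Defs
  imports "HOL-Probability.Probability"
begin

text \<open>A (randomized) classifier is a function of (X,U), with values in {0,1,2}
  (0 = indecision), measurable w.r.t. the product of the sample space and Borel sets.
  U is uniform on [0,1] and independent of (X,Y).\<close>

definition classifier :: "'a measure \<Rightarrow> ('a \<times> real \<Rightarrow> nat) \<Rightarrow> bool" where
  "classifier M Yt \<longleftrightarrow> Yt \<in> (M \<Otimes>\<^sub>M lborel) \<rightarrow>\<^sub>M count_space UNIV
      \<and> (\<forall>z \<in> space (M \<Otimes>\<^sub>M lborel). Yt z \<in> {0, 1, 2})"

definition cprob :: "'a measure \<Rightarrow> ('a \<Rightarrow> real) \<Rightarrow> ('a \<times> real \<Rightarrow> nat) \<Rightarrow> nat \<Rightarrow> real" where
  "cprob M f Yt k =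
     measure (density M (\<lambda>x. ennreal (f x)) \<Otimes>\<^sub>M uniform_measure lborel {0..1})
       {z \<in> space (M \<Otimes>\<^sub>M lborel). Yt z = k}"

definition optP :: "'a measure \<Rightarrow> real \<Rightarrow> real \<Rightarrow> ('a \<Rightarrow> real) \<Rightarrow> ('a \<Rightarrow> real)
                     \<Rightarrow> real \<Rightarrow> real \<Rightarrow> real" where
  "optP M p1 p2 f1 f2 \<alpha>1 \<gamma> =
     Inf {cprob M f2 Yt 1 / (1 - \<gamma>) | Yt.
            classifier M Yt
          \<and> p1 * cprob M f1 Yt 0 + p2 * cprob M f2 Yt 0 = \<gamma>
          \<and> cprob M f1 Yt 2 = \<alpha>1 * (1 - \<gamma>)}"

end

theory Submission
  imports Defs
begin

text \<open>
  Write \<open>R(\<gamma>)\<close> for \<open>\<P>(\<alpha>\<^sub>1,\<gamma>)\<close>. The auxiliary uniform variable \<open>U\<close> lets one run a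
  randomised mixture of classifiers: splitting \<open>[0,1]\<close> into intervals and rescaling \<open>U\<close> on
  each piece turns every output probability into the corresponding convex combination.
  Mixing a feasible classifier with the constant ``undecided'' moves it from \<open>\<gamma>\<close> to any
  \<open>\<gamma>' > \<gamma>\<close> without changing the objective, so \<open>R\<close> is non-increasing. Conversely, a
  classifier feasible at \<open>\<gamma>'\<close> can be mixed down to \<open>\<gamma> < \<gamma>'\<close> at an extra type II
  cost of at most \<open>(\<gamma>' - \<gamma>) / p\<^sub>2\<close>; hence
  \<open>(1 - \<gamma>) R(\<gamma>) \<le> (1 - \<gamma>') R(\<gamma>') + (\<gamma>' - \<gamma>) / p\<^sub>2\<close>, which together with monotonicity
  makes \<open>R\<close> locally Lipschitz. Finally, a classifier that decides 1 only on
  \<open>S\<^sub>\<epsilon> = {f\<^sub>2 \<le> \<epsilon> f\<^sub>1}\<close> can be made feasible as soon as \<open>1 - \<gamma>\<close> is below the mass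
  of \<open>S\<^sub>\<epsilon>\<close>, and its objective is then at most \<open>\<epsilon> / p\<^sub>1\<close>.
\<close>

section \<open>Rescaling the randomisation\<close>

lemma prob_space_uniform_01: "prob_space (uniform_measure lborel {0..1::real})"
  by (rule prob_space_uniform_measure) auto

lemma sets_pair_uniform_01:
  "sets (N \<Otimes>\<^sub>M uniform_measure lborel {0..1::real}) = sets (N \<Otimes>\<^sub>M lborel)"
  by (rule sets_pair_measure_cong) auto

lemma prob_space_pair_uniform_01:
  "prob_space N \<Longrightarrow> prob_space (N \<Otimes>\<^sub>M uniform_measure lborel {0..1::real})"
  by (rule prob_space_pair[OF _ prob_space_uniform_01])

lemma emeasure_uniform_measure_01:
  "B \<in> sets lborel \<Longrightarrow>
    emeasure (uniform_measure lborel {0..1::real}) B = emeasure lborel ({0..1} \<inter> B)"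
  by (simp add: divide_ennreal_def)

lemma emeasure_lborel_Ico_Int_eq_Icc_Int:
  "B \<in> sets lborel \<Longrightarrow> emeasure lborel ({0..<1::real} \<inter> B) = emeasure lborel ({0..1} \<inter> B)"
  by (rule emeasure_eq_AE) (use AE_lborel_singleton[of 1] in \<open>auto elim!: eventually_mono\<close>)

lemma emeasure_lborel_affine_preimage:
  assumes B: "B \<in> sets lborel" and c: "0 \<le> c" and w: "0 < w" "c + w \<le> 1"
  shows "emeasure lborel ({0..1::real} \<inter> {u. c \<le> u \<and> u < c + w \<and> (u - c) / w \<in> B})
       = ennreal w * emeasure lborel ({0..1} \<inter> B)"
proof -
  let ?S = "{0..1::real} \<inter> {u. c \<le> u \<and> u < c + w \<and> (u - c) / w \<in> B}"
  have "(\<lambda>u. (u - c) / w) -` B \<inter> space borel \<in> sets borel"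
    using B by (intro measurable_sets[of _ borel]) auto
  moreover have "?S = {0..1} \<inter> {c..<c+w} \<inter> ((\<lambda>u. (u - c) / w) -` B \<inter> space borel)"
    by auto
  ultimately have S: "?S \<in> sets borel"
    by auto
  have indicator_eq: "indicator ?S (c + w * y) = (indicator ({0..<1} \<inter> B) y :: ennreal)" for y
  proof -
    have "c \<le> c + w * y \<longleftrightarrow> 0 \<le> y" "c + w * y < c + w \<longleftrightarrow> y < 1"
      using w by (simp_all add: zero_le_mult_iff)
    moreover have "c + w * y \<le> 1" if "y < 1"
      using mult_strict_left_mono[OF that w(1)] w(2) by linarith
    moreover have "(c + w * y - c) / w = y"
      using w by simp
    ultimately have "c + w * y \<in> ?S \<longleftrightarrow> y \<in> {0..<1} \<inter> B"
      using c by auto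
    then show ?thesis
      by (simp add: indicator_def)
  qed
  have "emeasure lborel ?S = (\<integral>\<^sup>+u. indicator ?S u \<partial>lborel)"
    using S by simp
  also have "\<dots> = \<bar>w\<bar> * (\<integral>\<^sup>+y. indicator ?S (c + w * y) \<partial>lborel)"
    using S w by (intro nn_integral_real_affine) auto
  also have "\<dots> = ennreal w * emeasure lborel ({0..<1} \<inter> B)"
    using B w by (simp add: indicator_eq)
  finally show ?thesis
    by (simp add: emeasure_lborel_Ico_Int_eq_Icc_Int[OF B])
qed

definition rescale :: "real \<Rightarrow> real \<Rightarrow> 'a \<times> real \<Rightarrow> 'a \<times> real" where
  "rescale c w z = (fst z, (snd z - c) / w)"

lemma rescale_1 [simp]: "rescale 0 1 z = z"
  by (simp add: rescale_def)

lemma measurable_rescale [measurable]: "rescale c w \<in> N \<Otimes>\<^sub>M lborel \<rightarrow>\<^sub>M N \<Otimes>\<^sub>M lborel"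
  unfolding rescale_def[abs_def] by measurable

lemma sets_output_event:
  assumes "Y \<in> N \<Otimes>\<^sub>M lborel \<rightarrow>\<^sub>M count_space UNIV"
  shows "{z \<in> space (N \<Otimes>\<^sub>M lborel). Y z \<in> K} \<in> sets (N \<Otimes>\<^sub>M lborel)"
proof -
  have "Y -` K \<inter> space (N \<Otimes>\<^sub>M lborel) \<in> sets (N \<Otimes>\<^sub>M lborel)"
    using assms by (rule measurable_sets) simp
  then show ?thesis
    by (simp add: Int_def conj_commute)
qed

lemma sets_rescaled_event:
  assumes Y: "Y \<in> N \<Otimes>\<^sub>M lborel \<rightarrow>\<^sub>M count_space UNIV"
  shows "{z \<in> space (N \<Otimes>\<^sub>M lborel). c \<le> snd z \<and> snd z < c + w \<and> Y (rescale c w z) \<in> K}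
           \<in> sets (N \<Otimes>\<^sub>M lborel)"
proof -
  have "{z \<in> space (N \<Otimes>\<^sub>M lborel). Y (rescale c w z) \<in> K} \<in> sets (N \<Otimes>\<^sub>M lborel)"
    using sets_output_event[OF measurable_compose[OF measurable_rescale Y]] .
  moreover have "{z \<in> space (N \<Otimes>\<^sub>M lborel). c \<le> snd z \<and> snd z < c + w} \<in> sets (N \<Otimes>\<^sub>M lborel)"
    by measurable
  ultimately have "{z \<in> space (N \<Otimes>\<^sub>M lborel). Y (rescale c w z) \<in> K}
      \<inter> {z \<in> space (N \<Otimes>\<^sub>M lborel). c \<le> snd z \<and> snd z < c + w} \<in> sets (N \<Otimes>\<^sub>M lborel)"
    by (rule sets.Int)
  also have "{z \<in> space (N \<Otimes>\<^sub>M lborel). Y (rescale c w z) \<in> K}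
      \<inter> {z \<in> space (N \<Otimes>\<^sub>M lborel). c \<le> snd z \<and> snd z < c + w}
    = {z \<in> space (N \<Otimes>\<^sub>M lborel). c \<le> snd z \<and> snd z < c + w \<and> Y (rescale c w z) \<in> K}"
    by blast
  finally show ?thesis .
qed

definition output_prob :: "'a measure \<Rightarrow> ('a \<times> real \<Rightarrow> nat) \<Rightarrow> nat set \<Rightarrow> real" where
  "output_prob N Y K =
     measure (N \<Otimes>\<^sub>M uniform_measure lborel {0..1::real}) {z \<in> space (N \<Otimes>\<^sub>M lborel). Y z \<in> K}"

lemma emeasure_rescaled_event:
  assumes Y: "Y \<in> N \<Otimes>\<^sub>M lborel \<rightarrow>\<^sub>M count_space UNIV"
    and c: "0 \<le> c" and w: "0 < w" "c + w \<le> 1"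
  shows "emeasure (N \<Otimes>\<^sub>M uniform_measure lborel {0..1::real})
           {z \<in> space (N \<Otimes>\<^sub>M lborel). c \<le> snd z \<and> snd z < c + w \<and> Y (rescale c w z) \<in> K}
       = ennreal w * emeasure (N \<Otimes>\<^sub>M uniform_measure lborel {0..1::real})
           {z \<in> space (N \<Otimes>\<^sub>M lborel). Y z \<in> K}"
proof -
  let ?U = "uniform_measure lborel {0..1::real}"
  interpret U: prob_space ?U by (rule prob_space_uniform_01)
  let ?Z = "{z \<in> space (N \<Otimes>\<^sub>M lborel). Y z \<in> K}"
  let ?S = "{z \<in> space (N \<Otimes>\<^sub>M lborel). c \<le> snd z \<and> snd z < c + w \<and> Y (rescale c w z) \<in> K}"
  have Z0: "?Z \<in> sets (N \<Otimes>\<^sub>M lborel)" and S0: "?S \<in> sets (N \<Otimes>\<^sub>M lborel)"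
    using sets_output_event[OF Y] sets_rescaled_event[OF Y] .
  then have Z: "?Z \<in> sets (N \<Otimes>\<^sub>M ?U)" and S: "?S \<in> sets (N \<Otimes>\<^sub>M ?U)"
    by (simp_all add: sets_pair_uniform_01)
  have slice: "emeasure ?U (Pair x -` ?S) = ennreal w * emeasure ?U (Pair x -` ?Z)"
    if x: "x \<in> space N" for x
  proof -
    have B: "Pair x -` ?Z \<in> sets lborel" "Pair x -` ?S \<in> sets lborel"
      by (rule sets_Pair1[OF Z0], rule sets_Pair1[OF S0])
    have "Pair x -` ?S = {u. c \<le> u \<and> u < c + w \<and> (u - c) / w \<in> Pair x -` ?Z}"
      using x by (auto simp: space_pair_measure rescale_def)
    then show ?thesis
      unfolding emeasure_uniform_measure_01[OF B(1)] emeasure_uniform_measure_01[OF B(2)]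
      by (simp only: emeasure_lborel_affine_preimage[OF B(1) c w])
  qed
  have "emeasure (N \<Otimes>\<^sub>M ?U) ?S = (\<integral>\<^sup>+x. emeasure ?U (Pair x -` ?S) \<partial>N)"
    using S by (rule U.emeasure_pair_measure_alt)
  also have "\<dots> = (\<integral>\<^sup>+x. ennreal w * emeasure ?U (Pair x -` ?Z) \<partial>N)"
    by (rule nn_integral_cong) (rule slice)
  also have "\<dots> = ennreal w * (\<integral>\<^sup>+x. emeasure ?U (Pair x -` ?Z) \<partial>N)"
    using Z by (intro nn_integral_cmult U.measurable_emeasure_Pair)
  also have "\<dots> = ennreal w * emeasure (N \<Otimes>\<^sub>M ?U) ?Z"
    using Z by (simp add: U.emeasure_pair_measure_alt)
  finally show ?thesis .
qed

lemma measure_rescaled_event: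
  assumes "Y \<in> N \<Otimes>\<^sub>M lborel \<rightarrow>\<^sub>M count_space UNIV"
    and "0 \<le> c" "0 \<le> w" "c + w \<le> 1"
  shows "measure (N \<Otimes>\<^sub>M uniform_measure lborel {0..1::real})
           {z \<in> space (N \<Otimes>\<^sub>M lborel). c \<le> snd z \<and> snd z < c + w \<and> Y (rescale c w z) \<in> K}
       = w * output_prob N Y K"
proof (cases "w = 0")
  case False
  then show ?thesis
    using emeasure_rescaled_event[of Y N c w K] assms
    by (simp add: output_prob_def measure_def enn2real_mult)
next
  case True
  then have "{z \<in> space (N \<Otimes>\<^sub>M lborel). c \<le> snd z \<and> snd z < c + w \<and> Y (rescale c w z) \<in> K} = {}"
    by auto
  then show ?thesis
    using True by (simp only: measure_empty mult_zero_left)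
qed

section \<open>Mixtures of classifiers\<close>

text \<open>\<open>U\<close> is used twice: the interval \<open>[0,a)\<close>, \<open>[a,a+b)\<close> or \<open>[a+b,1]\<close> containing
  it selects the classifier, and its affine image in \<open>[0,1)\<close> is the randomisation
  passed on to that classifier.\<close>

definition mixture :: "real \<Rightarrow> real \<Rightarrow> ('a \<times> real \<Rightarrow> nat) \<Rightarrow> ('a \<times> real \<Rightarrow> nat)
    \<Rightarrow> ('a \<times> real \<Rightarrow> nat) \<Rightarrow> 'a \<times> real \<Rightarrow> nat" where
  "mixture a b Y1 Y2 Y3 z =
     (if snd z < a then Y1 (rescale 0 a z)
      else if snd z < a + b then Y2 (rescale a b z)
      else Y3 (rescale (a + b) (1 - (a + b)) z))"

lemma measurable_mixture:
  assumes "Y1 \<in> N \<Otimes>\<^sub>M lborel \<rightarrow>\<^sub>M count_space UNIV"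
    "Y2 \<in> N \<Otimes>\<^sub>M lborel \<rightarrow>\<^sub>M count_space UNIV"
    "Y3 \<in> N \<Otimes>\<^sub>M lborel \<rightarrow>\<^sub>M count_space UNIV"
  shows "mixture a b Y1 Y2 Y3 \<in> N \<Otimes>\<^sub>M lborel \<rightarrow>\<^sub>M count_space UNIV"
proof -
  have "{z \<in> space (N \<Otimes>\<^sub>M lborel). snd z < c} \<in> sets (N \<Otimes>\<^sub>M lborel)" for c :: real
    by measurable
  then show ?thesis
    unfolding mixture_def[abs_def]
    by (intro measurable_If measurable_compose[OF measurable_rescale] assms)
qed

lemma output_prob_mixture:
  assumes N: "prob_space N"
    and Y: "Y1 \<in> N \<Otimes>\<^sub>M lborel \<rightarrow>\<^sub>M count_space UNIV"
      "Y2 \<in> N \<Otimes>\<^sub>M lborel \<rightarrow>\<^sub>M count_space UNIV"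
      "Y3 \<in> N \<Otimes>\<^sub>M lborel \<rightarrow>\<^sub>M count_space UNIV"
    and ab: "0 \<le> a" "0 \<le> b" "a + b \<le> 1"
  shows "output_prob N (mixture a b Y1 Y2 Y3) K
       = a * output_prob N Y1 K + b * output_prob N Y2 K + (1 - (a + b)) * output_prob N Y3 K"
proof -
  let ?NU = "N \<Otimes>\<^sub>M uniform_measure lborel {0..1::real}"
  interpret prob_space ?NU
    using N by (rule prob_space_pair_uniform_01)
  let ?Y = "mixture a b Y1 Y2 Y3"
  let ?E = "\<lambda>c w Y. {z \<in> space (N \<Otimes>\<^sub>M lborel).
                      c \<le> snd z \<and> snd z < c + w \<and> Y (rescale c w z) \<in> K}"
  have E1: "?E 0 a Y1 \<in> sets ?NU" and E2: "?E a b Y2 \<in> sets ?NU"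
    and E3: "?E (a + b) (1 - (a + b)) Y3 \<in> sets ?NU"
    unfolding sets_pair_uniform_01 by (intro sets_rescaled_event Y)+
  have "output_prob N ?Y K = measure ?NU (?E 0 1 ?Y)"
    using measure_rescaled_event[OF measurable_mixture[OF Y], of 0 1 a b K] by simp
  also have "?E 0 1 ?Y = ?E 0 a Y1 \<union> ?E a b Y2 \<union> ?E (a + b) (1 - (a + b)) Y3"
    using ab by (auto simp: mixture_def split: if_splits)
  also have "measure ?NU \<dots> = measure ?NU (?E 0 a Y1 \<union> ?E a b Y2) + measure ?NU (?E (a + b) (1 - (a + b)) Y3)"
    by (rule finite_measure_Union[OF sets.Un[OF E1 E2] E3]) (use ab in auto)
  also have "measure ?NU (?E 0 a Y1 \<union> ?E a b Y2) = measure ?NU (?E 0 a Y1) + measure ?NU (?E a b Y2)"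
    by (rule finite_measure_Union[OF E1 E2]) auto
  also have "measure ?NU (?E 0 a Y1) = a * output_prob N Y1 K"
    by (rule measure_rescaled_event[OF Y(1)]) (use ab in auto)
  also have "measure ?NU (?E a b Y2) = b * output_prob N Y2 K"
    by (rule measure_rescaled_event[OF Y(2)]) (use ab in auto)
  also have "measure ?NU (?E (a + b) (1 - (a + b)) Y3) = (1 - (a + b)) * output_prob N Y3 K"
    by (rule measure_rescaled_event[OF Y(3)]) (use ab in auto)
  finally show ?thesis .
qed

lemma output_prob_const:
  assumes "prob_space N"
  shows "output_prob N (\<lambda>z. k) K = (if k \<in> K then 1 else 0)"
proof -
  interpret prob_space "N \<Otimes>\<^sub>M uniform_measure lborel {0..1::real}"
    using assms by (rule prob_space_pair_uniform_01)
  show ?thesis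
  proof (cases "k \<in> K")
    case True
    then have "{z \<in> space (N \<Otimes>\<^sub>M lborel). k \<in> K} = space (N \<Otimes>\<^sub>M uniform_measure lborel {0..1::real})"
      by (simp add: space_pair_measure)
    then show ?thesis
      using True by (simp add: output_prob_def prob_space)
  qed (simp add: output_prob_def)
qed

lemma output_prob_cong:
  "(\<And>z. z \<in> space (N \<Otimes>\<^sub>M lborel) \<Longrightarrow> Y z \<in> K \<longleftrightarrow> Y' z \<in> L) \<Longrightarrow>
    output_prob N Y K = output_prob N Y' L"
  unfolding output_prob_def by (metis (no_types, lifting))

lemma output_prob_Un:
  assumes "prob_space N" and Y: "Y \<in> N \<Otimes>\<^sub>M lborel \<rightarrow>\<^sub>M count_space UNIV"
    and "K \<inter> L = {}"
  shows "output_prob N Y (K \<union> L) = output_prob N Y K + output_prob N Y L"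
proof -
  interpret prob_space "N \<Otimes>\<^sub>M uniform_measure lborel {0..1::real}"
    using assms(1) by (rule prob_space_pair_uniform_01)
  have "{z \<in> space (N \<Otimes>\<^sub>M lborel). Y z \<in> K \<union> L} =
      {z \<in> space (N \<Otimes>\<^sub>M lborel). Y z \<in> K} \<union> {z \<in> space (N \<Otimes>\<^sub>M lborel). Y z \<in> L}"
    by auto
  then show ?thesis
    using sets_output_event[OF Y] assms(3)
    by (simp add: output_prob_def finite_measure_Union sets_pair_uniform_01 disjoint_iff)
qed

lemma output_prob_indicator:
  assumes "prob_space N" and S: "S \<in> sets N"
  shows "output_prob N (\<lambda>z. if fst z \<in> S then 1 else 0) {1} = measure N S"
proof -
  interpret U: prob_space "uniform_measure lborel {0..1::real}"
    by (rule prob_space_uniform_01)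
  have "{z \<in> space (N \<Otimes>\<^sub>M lborel). (if fst z \<in> S then 1 else 0 :: nat) \<in> {1}}
      = S \<times> space (uniform_measure lborel {0..1::real})"
    using sets.sets_into_space[OF S] by (auto simp: space_pair_measure)
  moreover have "emeasure (N \<Otimes>\<^sub>M uniform_measure lborel {0..1::real}) (S \<times> space (uniform_measure lborel {0..1::real}))
      = emeasure N S"
    using S by (subst U.emeasure_pair_measure_Times) (auto simp: U.emeasure_space_1)
  ultimately show ?thesis
    unfolding output_prob_def measure_def by simp
qed

lemma prob_space_density_of_integral_eq_1:
  assumes "f \<in> borel_measurable M" "\<And>x. x \<in> space M \<Longrightarrow> 0 \<le> f x"
    and "integrable M f" "integral\<^sup>L M f = 1"
  shows "prob_space (density M (\<lambda>x. ennreal (f x)))"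
proof (rule prob_spaceI)
  have "emeasure (density M (\<lambda>x. ennreal (f x))) (space M) = (\<integral>\<^sup>+x. ennreal (f x) \<partial>M)"
    using assms(1) by (subst emeasure_density) (auto intro!: nn_integral_cong simp: indicator_def)
  also have "\<dots> = ennreal (integral\<^sup>L M f)"
    using assms by (intro nn_integral_eq_integral) auto
  finally show "emeasure (density M (\<lambda>x. ennreal (f x))) (space (density M (\<lambda>x. ennreal (f x)))) = 1"
    using assms(4) by simp
qed

lemma measure_density_eq_integral:
  assumes "f \<in> borel_measurable M" "\<And>x. x \<in> space M \<Longrightarrow> 0 \<le> f x" "integrable M f"
    and "S \<in> sets M"
  shows "measure (density M (\<lambda>x. ennreal (f x))) S = (\<integral>x. f x * indicator S x \<partial>M)"
proof -
  have "emeasure (density M (\<lambda>x. ennreal (f x))) S = (\<integral>\<^sup>+x. ennreal (f x * indicator S x) \<partial>M)"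
    using assms by (subst emeasure_density) (auto intro!: nn_integral_cong split: split_indicator)
  also have "\<dots> = ennreal (\<integral>x. f x * indicator S x \<partial>M)"
    using assms by (intro nn_integral_eq_integral integrable_real_mult_indicator)
      (auto split: split_indicator)
  finally show ?thesis
    unfolding measure_def using assms by (simp add: integral_nonneg_AE split: split_indicator)
qed

lemma measure_density_lin_comb:
  assumes f: "f \<in> borel_measurable M" "\<And>x. x \<in> space M \<Longrightarrow> 0 \<le> f x" "integrable M f"
    and g: "g \<in> borel_measurable M" "\<And>x. x \<in> space M \<Longrightarrow> 0 \<le> g x" "integrable M g"
    and ab: "0 \<le> a" "0 \<le> b" and S: "S \<in> sets M"
  shows "measure (density M (\<lambda>x. ennreal (a * f x + b * g x))) S
       = a * measure (density M (\<lambda>x. ennreal (f x))) S + b * measure (density M (\<lambda>x. ennreal (g x))) S"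
proof -
  have "measure (density M (\<lambda>x. ennreal (a * f x + b * g x))) S
      = (\<integral>x. (a * f x + b * g x) * indicator S x \<partial>M)"
    using f g ab S by (intro measure_density_eq_integral) auto
  also have "\<dots> = (\<integral>x. a * (f x * indicator S x) + b * (g x * indicator S x) \<partial>M)"
    by (simp add: algebra_simps)
  also have "\<dots> = a * (\<integral>x. f x * indicator S x \<partial>M) + b * (\<integral>x. g x * indicator S x \<partial>M)"
    using f(3) g(3) S by (simp add: integrable_real_mult_indicator)
  finally show ?thesis
    using f g S by (simp add: measure_density_eq_integral)
qed

lemma measure_density_le_cmult:
  assumes f: "f \<in> borel_measurable M" "\<And>x. x \<in> space M \<Longrightarrow> 0 \<le> f x" "integrable M f"
    and g: "g \<in> borel_measurable M" "\<And>x. x \<in> space M \<Longrightarrow> 0 \<le> g x" "integrable M g"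
    and S: "S \<in> sets M" and le: "\<And>x. x \<in> S \<Longrightarrow> f x \<le> c * g x"
  shows "measure (density M (\<lambda>x. ennreal (f x))) S \<le> c * measure (density M (\<lambda>x. ennreal (g x))) S"
proof -
  have "(\<integral>x. f x * indicator S x \<partial>M) \<le> (\<integral>x. c * (g x * indicator S x) \<partial>M)"
    using f(3) g(3) S le by (intro integral_mono) (auto simp: integrable_real_mult_indicator split: split_indicator)
  then show ?thesis
    using f g S by (simp add: measure_density_eq_integral)
qed

lemma cprob_eq_output_prob: "cprob M f Y k = output_prob (density M (\<lambda>x. ennreal (f x))) Y {k}"
  by (simp add: cprob_def output_prob_def space_pair_measure)

lemma cprob_nonneg: "0 \<le> cprob M f Y k"
  by (simp add: cprob_def)

lemma measurable_density_pair_lborel: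
  "Y \<in> M \<Otimes>\<^sub>M lborel \<rightarrow>\<^sub>M N \<Longrightarrow> Y \<in> density M g \<Otimes>\<^sub>M lborel \<rightarrow>\<^sub>M N"
  by (metis measurable_cong_sets sets_density sets_pair_measure_cong)

lemma classifier_measurable: "classifier M Y \<Longrightarrow> Y \<in> M \<Otimes>\<^sub>M lborel \<rightarrow>\<^sub>M count_space UNIV"
  by (simp add: classifier_def)

lemma classifier_const: "k \<in> {0, 1, 2} \<Longrightarrow> classifier M (\<lambda>z. k)"
  by (simp add: classifier_def)

lemma classifier_indicator:
  assumes "S \<in> sets M"
  shows "classifier M (\<lambda>z. if fst z \<in> S then 1 else 0)"
proof -
  have "(\<lambda>z. if fst z \<in> S then 1 else 0 :: nat) \<in> M \<Otimes>\<^sub>M lborel \<rightarrow>\<^sub>M count_space UNIV"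
    using assms by measurable
  then show ?thesis
    by (simp add: classifier_def)
qed

lemma classifier_undecided_to_1:
  assumes "classifier M Y"
  shows "classifier M (\<lambda>z. if Y z = 0 then 1 else Y z)"
proof -
  have "(\<lambda>k::nat. if k = 0 then 1 else k) \<in> count_space UNIV \<rightarrow>\<^sub>M count_space UNIV"
    by simp
  then have "(\<lambda>z. if Y z = 0 then 1 else Y z) \<in> M \<Otimes>\<^sub>M lborel \<rightarrow>\<^sub>M count_space UNIV"
    using measurable_compose[OF classifier_measurable[OF assms]] by blast
  then show ?thesis
    using assms unfolding classifier_def by auto
qed

lemma classifier_mixture:
  assumes Y: "classifier M Y1" "classifier M Y2" "classifier M Y3"
  shows "classifier M (mixture a b Y1 Y2 Y3)"
  unfolding classifier_def
proof
  show "mixture a b Y1 Y2 Y3 \<in> M \<Otimes>\<^sub>M lborel \<rightarrow>\<^sub>M count_space UNIV"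
    using Y by (intro measurable_mixture classifier_measurable)
  have output_values: "Y (rescale c w z) \<in> {0, 1, 2}"
    if "classifier M Y" "z \<in> space (M \<Otimes>\<^sub>M lborel)" for Y c w z
  proof -
    have "rescale c w z \<in> space (M \<Otimes>\<^sub>M lborel)"
      using that(2) by (auto simp: space_pair_measure rescale_def)
    then show ?thesis
      using that(1) unfolding classifier_def by blast
  qed
  show "\<forall>z\<in>space (M \<Otimes>\<^sub>M (lborel :: real measure)). mixture a b Y1 Y2 Y3 z \<in> {0, 1, 2}"
  proof
    fix z :: "'a \<times> real" assume z: "z \<in> space (M \<Otimes>\<^sub>M lborel)"
    show "mixture a b Y1 Y2 Y3 z \<in> {0, 1, 2}"
      using output_values[OF Y(1) z] output_values[OF Y(2) z] output_values[OF Y(3) z]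
      unfolding mixture_def by (simp only: split: if_split) blast
  qed
qed

context
  fixes M :: "'a measure" and f :: "'a \<Rightarrow> real"
  assumes prob: "prob_space (density M (\<lambda>x. ennreal (f x)))"
begin

lemma cprob_mixture:
  assumes "classifier M Y1" "classifier M Y2" "classifier M Y3"
    and "0 \<le> a" "0 \<le> b" "a + b \<le> 1"
  shows "cprob M f (mixture a b Y1 Y2 Y3) k
       = a * cprob M f Y1 k + b * cprob M f Y2 k + (1 - (a + b)) * cprob M f Y3 k"
  unfolding cprob_eq_output_prob
  using assms by (intro output_prob_mixture prob measurable_density_pair_lborel classifier_measurable)

lemma cprob_const: "cprob M f (\<lambda>z. j) k = (if j = k then 1 else 0)"
  by (simp add: cprob_eq_output_prob output_prob_const[OF prob])

lemma cprob_undecided_to_1: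
  assumes Y: "classifier M Y"
  shows "cprob M f (\<lambda>z. if Y z = 0 then 1 else Y z) 0 = 0"
    and "cprob M f (\<lambda>z. if Y z = 0 then 1 else Y z) 1 = cprob M f Y 0 + cprob M f Y 1"
    and "cprob M f (\<lambda>z. if Y z = 0 then 1 else Y z) 2 = cprob M f Y 2"
proof -
  let ?P = "density M (\<lambda>x. ennreal (f x))"
  show "cprob M f (\<lambda>z. if Y z = 0 then 1 else Y z) 0 = 0"
    using output_prob_cong[of _ _ "{0}" Y "{}"] by (simp add: cprob_eq_output_prob output_prob_def)
  show "cprob M f (\<lambda>z. if Y z = 0 then 1 else Y z) 2 = cprob M f Y 2"
    unfolding cprob_eq_output_prob by (rule output_prob_cong) auto
  have "output_prob ?P (\<lambda>z. if Y z = 0 then 1 else Y z) {1} = output_prob ?P Y ({0} \<union> {1})"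
    by (rule output_prob_cong) auto
  also have "\<dots> = output_prob ?P Y {0} + output_prob ?P Y {1}"
    using prob measurable_density_pair_lborel[OF classifier_measurable[OF Y]] by (rule output_prob_Un) auto
  finally show "cprob M f (\<lambda>z. if Y z = 0 then 1 else Y z) 1 = cprob M f Y 0 + cprob M f Y 1"
    by (simp add: cprob_eq_output_prob)
qed

lemma cprob_indicator:
  assumes S: "S \<in> sets M"
  shows "cprob M f (\<lambda>z. if fst z \<in> S then 1 else 0) 0 = 1 - measure (density M (\<lambda>x. ennreal (f x))) S"
    and "cprob M f (\<lambda>z. if fst z \<in> S then 1 else 0) 1 = measure (density M (\<lambda>x. ennreal (f x))) S"
    and "cprob M f (\<lambda>z. if fst z \<in> S then 1 else 0) 2 = 0"
proof -
  let ?P = "density M (\<lambda>x. ennreal (f x))" and ?I = "\<lambda>z. if fst z \<in> S then 1 else 0 :: nat"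
  have S': "S \<in> sets ?P"
    using S by simp
  show 1: "cprob M f ?I 1 = measure ?P S"
    unfolding cprob_eq_output_prob by (rule output_prob_indicator[OF prob S'])
  have "output_prob ?P ?I {0} + output_prob ?P ?I {1} = output_prob ?P ?I ({0} \<union> {1})"
    using prob measurable_density_pair_lborel[OF classifier_measurable[OF classifier_indicator[OF S]]]
    by (rule output_prob_Un[symmetric]) auto
  also have "\<dots> = output_prob ?P (\<lambda>z. 0) {0}"
    by (rule output_prob_cong) auto
  finally show "cprob M f ?I 0 = 1 - measure ?P S"
    using 1 output_prob_const[OF prob] by (simp add: cprob_eq_output_prob)
  show "cprob M f ?I 2 = 0"
    using output_prob_cong[of _ _ "{2}" ?I "{}"] by (simp add: cprob_eq_output_prob output_prob_def)
qed

end

section \<open>The optimal risk\<close>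

lemma threshold_weight:
  fixes \<alpha> \<gamma> m :: real
  assumes \<alpha>: "0 \<le> \<alpha>" "\<alpha> \<le> 1" and m: "0 < m" "m \<le> 1" and \<gamma>: "1 - m \<le> \<gamma>" "\<gamma> < 1"
  defines "t \<equiv> (1 - \<alpha>) * (1 - \<gamma>) / m"
  shows "0 \<le> \<alpha> * (1 - \<gamma>)" "0 \<le> t" "\<alpha> * (1 - \<gamma>) + t \<le> 1" "t * m = (1 - \<alpha>) * (1 - \<gamma>)"
proof -
  have "(1 - \<alpha>) * ((1 - \<gamma>) / m) \<le> 1 - \<alpha>"
    using \<alpha> \<gamma> m by (intro mult_left_le) auto
  moreover have "\<alpha> * (1 - \<gamma>) \<le> \<alpha>"
    using \<alpha> \<gamma> m by (intro mult_left_le) auto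
  ultimately show "0 \<le> \<alpha> * (1 - \<gamma>)" "0 \<le> t" "\<alpha> * (1 - \<gamma>) + t \<le> 1"
    using \<alpha> \<gamma> m by (auto simp: t_def)
  show "t * m = (1 - \<alpha>) * (1 - \<gamma>)"
    using m by (simp add: t_def)
qed

lemma lower_indecision_weight:
  fixes \<alpha> \<gamma> \<gamma>' :: real
  assumes \<alpha>: "0 \<le> \<alpha>" "\<alpha> \<le> 1" and \<gamma>: "0 \<le> \<gamma>" "\<gamma> < \<gamma>'" "\<gamma>' < 1"
  defines "c \<equiv> \<alpha> * (\<gamma>' - \<gamma>) / (1 - \<alpha> * (1 - \<gamma>'))"
  shows "0 \<le> c" "c \<le> (\<gamma>' - \<gamma>) / \<gamma>'" "(1 - c) * (\<alpha> * (1 - \<gamma>')) + c = \<alpha> * (1 - \<gamma>)"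
proof -
  define D where "D = 1 - \<alpha> * (1 - \<gamma>')"
  have "\<alpha> * (1 - \<gamma>') \<le> 1 - \<gamma>'"
    using \<alpha> \<gamma> by (intro mult_left_le_one_le) auto
  moreover have "D - \<alpha> * \<gamma>' = 1 - \<alpha>"
    by (simp add: D_def algebra_simps)
  ultimately have D: "\<alpha> * \<gamma>' \<le> D" "0 < D"
    using \<alpha> \<gamma> unfolding D_def by linarith+
  show "0 \<le> c"
    using \<alpha> \<gamma> D by (simp add: c_def D_def[symmetric])
  have "\<alpha> * (\<gamma>' - \<gamma>) * \<gamma>' \<le> (\<gamma>' - \<gamma>) * D"
    using mult_left_mono[OF D(1), of "\<gamma>' - \<gamma>"] \<gamma> by (simp add: mult_ac)
  then show "c \<le> (\<gamma>' - \<gamma>) / \<gamma>'"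
    using D(2) \<gamma> by (simp add: c_def D_def[symmetric] divide_simps)
  have "c * D = \<alpha> * (\<gamma>' - \<gamma>)"
    using D(2) by (simp add: c_def D_def[symmetric])
  then show "(1 - c) * (\<alpha> * (1 - \<gamma>')) + c = \<alpha> * (1 - \<gamma>)"
    by (simp add: D_def algebra_simps)
qed

locale two_class_problem =
  fixes M :: "'a measure" and f1 f2 :: "'a \<Rightarrow> real" and p1 p2 \<alpha>1 :: real
  assumes f1: "f1 \<in> borel_measurable M" "\<And>x. x \<in> space M \<Longrightarrow> 0 \<le> f1 x"
      "integrable M f1" "integral\<^sup>L M f1 = 1"
    and f2: "f2 \<in> borel_measurable M" "\<And>x. x \<in> space M \<Longrightarrow> 0 \<le> f2 x"
      "integrable M f2" "integral\<^sup>L M f2 = 1"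
    and p1: "0 < p1" and p2: "0 < p2" and p1_p2: "p1 + p2 = 1"
    and \<alpha>1: "0 \<le> \<alpha>1" "\<alpha>1 \<le> 1"
begin

abbreviation "P1 \<equiv> density M (\<lambda>x. ennreal (f1 x))"
abbreviation "P2 \<equiv> density M (\<lambda>x. ennreal (f2 x))"

lemma prob_space_P1: "prob_space P1"
  using f1 by (rule prob_space_density_of_integral_eq_1)

lemma prob_space_P2: "prob_space P2"
  using f2 by (rule prob_space_density_of_integral_eq_1)

definition feasible :: "real \<Rightarrow> ('a \<times> real \<Rightarrow> nat) \<Rightarrow> bool" where
  "feasible \<gamma> Y \<longleftrightarrow> classifier M Y \<and> p1 * cprob M f1 Y 0 + p2 * cprob M f2 Y 0 = \<gamma>
      \<and> cprob M f1 Y 2 = \<alpha>1 * (1 - \<gamma>)"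

abbreviation "risk \<equiv> optP M p1 p2 f1 f2 \<alpha>1"

lemma risk_eq_Inf: "risk \<gamma> = Inf {cprob M f2 Y 1 / (1 - \<gamma>) | Y. feasible \<gamma> Y}"
  by (simp add: optP_def feasible_def)

lemma feasible_exists:
  assumes \<gamma>: "0 \<le> \<gamma>" "\<gamma> < 1"
  shows "\<exists>Y. feasible \<gamma> Y"
proof -
  have "0 \<le> \<alpha>1 * (1 - \<gamma>)" "\<alpha>1 * (1 - \<gamma>) \<le> 1 - \<gamma>"
    using \<alpha>1 \<gamma> by (auto intro: mult_left_le_one_le)
  then have ab: "0 \<le> \<gamma>" "0 \<le> \<alpha>1 * (1 - \<gamma>)" "\<gamma> + \<alpha>1 * (1 - \<gamma>) \<le> 1"
    using \<gamma> by linarith+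
  let ?Y = "mixture \<gamma> (\<alpha>1 * (1 - \<gamma>)) (\<lambda>z. 0) (\<lambda>z. 2) (\<lambda>z. 1)"
  have "cprob M f ?Y 0 = \<gamma>" "cprob M f ?Y 2 = \<alpha>1 * (1 - \<gamma>)"
    if "prob_space (density M (\<lambda>x. ennreal (f x)))" for f
    using ab by (simp_all add: cprob_mixture[OF that] cprob_const[OF that] classifier_const)
  then have "feasible \<gamma> ?Y"
    using prob_space_P1 prob_space_P2 p1_p2
    by (simp add: feasible_def classifier_mixture classifier_const flip: distrib_right)
  then show ?thesis by blast
qed

text \<open>Abstaining with an extra probability \<open>q\<close> multiplies every other output probability
  by \<open>1 - q = (1 - \<gamma>') / (1 - \<gamma>)\<close>.\<close>

lemma feasible_raise_indecision:
  assumes \<gamma>: "0 \<le> \<gamma>" "\<gamma> \<le> \<gamma>'" "\<gamma>' < 1" and Y: "feasible \<gamma> Y"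
  shows "\<exists>Y'. feasible \<gamma>' Y' \<and> cprob M f2 Y' 1 / (1 - \<gamma>') = cprob M f2 Y 1 / (1 - \<gamma>)"
proof -
  define q where "q = (\<gamma>' - \<gamma>) / (1 - \<gamma>)"
  have q: "0 \<le> q" "q \<le> 1" "(1 - q) * (1 - \<gamma>) = 1 - \<gamma>'" "0 < 1 - q"
    using \<gamma> by (auto simp: q_def field_simps)
  let ?Y = "mixture q 0 (\<lambda>z. 0) (\<lambda>z. 0) Y"
  have cl: "classifier M Y"
    using Y by (simp add: feasible_def)
  have cl': "classifier M ?Y"
    using cl by (intro classifier_mixture classifier_const) auto
  have cprob_Y': "cprob M f ?Y k = q * (if 0 = k then 1 else 0) + (1 - q) * cprob M f Y k"
    if "prob_space (density M (\<lambda>x. ennreal (f x)))" for f k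
    using q cl by (simp add: cprob_mixture[OF that] cprob_const[OF that] classifier_const)
  have "p1 * cprob M f1 ?Y 0 + p2 * cprob M f2 ?Y 0
      = (p1 + p2) * q + (1 - q) * (p1 * cprob M f1 Y 0 + p2 * cprob M f2 Y 0)"
    by (simp add: cprob_Y'[OF prob_space_P1] cprob_Y'[OF prob_space_P2] algebra_simps)
  also have "\<dots> = 1 - (1 - q) * (1 - \<gamma>)"
    using Y p1_p2 by (simp add: feasible_def algebra_simps)
  finally have indecision: "p1 * cprob M f1 ?Y 0 + p2 * cprob M f2 ?Y 0 = \<gamma>'"
    using q(3) by simp
  have "cprob M f1 ?Y 2 = \<alpha>1 * ((1 - q) * (1 - \<gamma>))"
    using Y by (simp add: cprob_Y'[OF prob_space_P1] feasible_def)
  then have type_I: "cprob M f1 ?Y 2 = \<alpha>1 * (1 - \<gamma>')"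
    using q(3) by simp
  have "cprob M f2 ?Y 1 / (1 - \<gamma>') = cprob M f2 Y 1 * (1 - q) / ((1 - q) * (1 - \<gamma>))"
    using q(3) by (simp add: cprob_Y'[OF prob_space_P2] mult.commute)
  also have "\<dots> = cprob M f2 Y 1 / (1 - \<gamma>)"
    using q(4) by simp
  finally show ?thesis
    using indecision type_I cl' unfolding feasible_def by blast
qed

text \<open>Keep the classifier with probability \<open>\<gamma> / \<gamma>'\<close>, which scales the indecision down to
  \<open>\<gamma>\<close>; spend the rest on the same classifier with indecision turned into 1 and on the
  constant 2, in the proportions that restore the type I constraint. The extra type II
  error is bounded by the indecision mass turned into 1.\<close>

lemma feasible_lower_indecision:
  assumes \<gamma>: "0 \<le> \<gamma>" "\<gamma> < \<gamma>'" "\<gamma>' < 1" and Y: "feasible \<gamma>' Y"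
  shows "\<exists>Y'. feasible \<gamma> Y' \<and> cprob M f2 Y' 1 \<le> cprob M f2 Y 1 + (\<gamma>' - \<gamma>) / p2"
proof -
  define c where "c = \<alpha>1 * (\<gamma>' - \<gamma>) / (1 - \<alpha>1 * (1 - \<gamma>'))"
  define a where "a = \<gamma> / \<gamma>'"
  define b where "b = 1 - a - c"
  note c = lower_indecision_weight[OF \<alpha>1 \<gamma>, folded c_def]
  have "1 - a = (\<gamma>' - \<gamma>) / \<gamma>'"
    using \<gamma> by (simp add: a_def field_simps)
  then have abc: "0 \<le> a" "0 \<le> b" "a + b \<le> 1" "1 - (a + b) = c" and b_le: "b \<le> (\<gamma>' - \<gamma>) / \<gamma>'"
    using \<gamma> c by (auto simp: a_def b_def)
  have cl: "classifier M Y"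
    using Y by (simp add: feasible_def)
  let ?G = "\<lambda>z. if Y z = 0 then 1 else Y z"
  let ?Y = "mixture a b Y ?G (\<lambda>z. 2)"
  have cl': "classifier M ?Y"
    using cl by (intro classifier_mixture classifier_undecided_to_1 classifier_const) auto
  have cprob_Y': "cprob M f ?Y k = a * cprob M f Y k + b * cprob M f ?G k + c * (if 2 = k then 1 else 0)"
    if "prob_space (density M (\<lambda>x. ennreal (f x)))" for f k
    using abc cl by (simp add: cprob_mixture[OF that] cprob_const[OF that]
        classifier_undecided_to_1 classifier_const)
  note cprob_G = cprob_undecided_to_1[OF prob_space_P1 cl] cprob_undecided_to_1[OF prob_space_P2 cl]
  have Y_constraints: "p1 * cprob M f1 Y 0 + p2 * cprob M f2 Y 0 = \<gamma>'" "cprob M f1 Y 2 = \<alpha>1 * (1 - \<gamma>')"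
    using Y by (simp_all add: feasible_def)
  have "p1 * cprob M f1 ?Y 0 + p2 * cprob M f2 ?Y 0 = a * (p1 * cprob M f1 Y 0 + p2 * cprob M f2 Y 0)"
    by (simp add: cprob_Y'[OF prob_space_P1] cprob_Y'[OF prob_space_P2] cprob_G algebra_simps)
  then have indecision: "p1 * cprob M f1 ?Y 0 + p2 * cprob M f2 ?Y 0 = \<gamma>"
    using Y_constraints(1) \<gamma> by (simp add: a_def)
  have "cprob M f1 ?Y 2 = (1 - c) * cprob M f1 Y 2 + c"
    unfolding cprob_Y'[OF prob_space_P1] cprob_G by (simp add: algebra_simps flip: abc(4))
  then have type_I: "cprob M f1 ?Y 2 = \<alpha>1 * (1 - \<gamma>)"
    using c(3) Y_constraints(2) by simp
  have "p2 * cprob M f2 Y 0 \<le> \<gamma>'"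
    using Y_constraints(1) mult_nonneg_nonneg[OF less_imp_le[OF p1] cprob_nonneg[of M f1 Y 0]]
    by linarith
  then have undecided: "cprob M f2 Y 0 \<le> \<gamma>' / p2"
    using p2 by (simp add: pos_le_divide_eq mult.commute)
  have "cprob M f2 ?Y 1 = (a + b) * cprob M f2 Y 1 + b * cprob M f2 Y 0"
    unfolding cprob_Y'[OF prob_space_P2] cprob_G by (simp add: algebra_simps)
  also have "\<dots> \<le> cprob M f2 Y 1 + (\<gamma>' - \<gamma>) / \<gamma>' * (\<gamma>' / p2)"
    using abc b_le undecided cprob_nonneg[of M f2 Y]
    by (intro add_mono mult_left_le_one_le mult_mono) auto
  also have "(\<gamma>' - \<gamma>) / \<gamma>' * (\<gamma>' / p2) = (\<gamma>' - \<gamma>) / p2"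
    using \<gamma> by simp
  finally show ?thesis
    using indecision type_I cl' unfolding feasible_def by blast
qed

lemma threshold_set_masses:
  fixes \<epsilon> :: real
  defines "S \<equiv> {x \<in> space M. f2 x \<le> \<epsilon> * f1 x}"
  shows "S \<in> sets M"
    and "measure (density M (\<lambda>x. ennreal (p1 * f1 x + p2 * f2 x))) S
       = p1 * measure P1 S + p2 * measure P2 S"
    and "measure P2 S \<le> \<epsilon> * measure P1 S"
proof -
  note [measurable] = f1(1) f2(1)
  show S_sets: "S \<in> sets M"
    unfolding S_def by measurable
  show "measure (density M (\<lambda>x. ennreal (p1 * f1 x + p2 * f2 x))) S
      = p1 * measure P1 S + p2 * measure P2 S"
    using f1 f2 p1 p2 S_sets by (intro measure_density_lin_comb) auto
  have "f2 x \<le> \<epsilon> * f1 x" if "x \<in> S" for x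
    using that by (simp add: S_def)
  then show "measure P2 S \<le> \<epsilon> * measure P1 S"
    using measure_density_le_cmult[OF f2(1-3) f1(1-3) S_sets] by simp
qed

text \<open>Decide 2 with probability \<open>\<alpha>\<^sub>1 (1 - \<gamma>)\<close>, otherwise decide 1 on \<open>S\<close> with the
  probability \<open>t\<close> that brings the indecision to \<open>\<gamma>\<close>; this needs \<open>1 - \<gamma> \<le> m\<close>.\<close>

lemma feasible_threshold:
  fixes \<epsilon> :: real
  defines "S \<equiv> {x \<in> space M. f2 x \<le> \<epsilon> * f1 x}"
  defines "m \<equiv> measure (density M (\<lambda>x. ennreal (p1 * f1 x + p2 * f2 x))) S"
  assumes \<epsilon>: "0 < \<epsilon>" and m: "0 < m" and \<gamma>: "1 - m \<le> \<gamma>" "\<gamma> < 1"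
  shows "\<exists>Y. feasible \<gamma> Y \<and> cprob M f2 Y 1 / (1 - \<gamma>) \<le> \<epsilon> / p1"
proof -
  define N1 where "N1 = measure P1 S"
  define N2 where "N2 = measure P2 S"
  have S_sets: "S \<in> sets M" and m_eq: "m = p1 * N1 + p2 * N2" and N2_le: "N2 \<le> \<epsilon> * N1"
    using threshold_set_masses[of \<epsilon>] unfolding S_def m_def N1_def N2_def by simp_all
  have N: "0 \<le> N1" "0 \<le> N2" "N1 \<le> 1" "N2 \<le> 1"
    using prob_space.prob_le_1[OF prob_space_P1] prob_space.prob_le_1[OF prob_space_P2]
    by (auto simp: N1_def N2_def)
  have "m \<le> p1 + p2"
    unfolding m_eq using N p1 p2 by (intro add_mono mult_left_le) auto
  define s where "s = \<alpha>1 * (1 - \<gamma>)"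
  define t where "t = (1 - \<alpha>1) * (1 - \<gamma>) / m"
  have st: "0 \<le> s" "0 \<le> t" "s + t \<le> 1" and tm: "t * m = (1 - \<alpha>1) * (1 - \<gamma>)"
    using threshold_weight[OF \<alpha>1 m _ \<gamma>, folded s_def t_def] \<open>m \<le> p1 + p2\<close> p1_p2 by auto
  let ?I = "\<lambda>z. if fst z \<in> S then 1 else 0 :: nat"
  let ?Y = "mixture s t (\<lambda>z. 2) ?I (\<lambda>z. 0)"
  have cl: "classifier M ?Y"
    using S_sets by (intro classifier_mixture classifier_const classifier_indicator) auto
  have cprob_Y: "cprob M f ?Y k
      = s * (if 2 = k then 1 else 0) + t * cprob M f ?I k + (1 - (s + t)) * (if 0 = k then 1 else 0)"
    if "prob_space (density M (\<lambda>x. ennreal (f x)))" for f k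
    using st S_sets by (simp add: cprob_mixture[OF that] cprob_const[OF that]
        classifier_const classifier_indicator)
  note cprob_I = cprob_indicator[OF prob_space_P1 S_sets] cprob_indicator[OF prob_space_P2 S_sets]
  have "p1 * cprob M f1 ?Y 0 + p2 * cprob M f2 ?Y 0 = (p1 + p2) * (1 - s) - t * m"
    unfolding cprob_Y[OF prob_space_P1] cprob_Y[OF prob_space_P2] cprob_I m_eq N1_def N2_def
    by (simp add: algebra_simps)
  then have indecision: "p1 * cprob M f1 ?Y 0 + p2 * cprob M f2 ?Y 0 = \<gamma>"
    unfolding tm p1_p2 s_def by (simp add: algebra_simps)
  have type_I: "cprob M f1 ?Y 2 = \<alpha>1 * (1 - \<gamma>)"
    unfolding cprob_Y[OF prob_space_P1] cprob_I by (simp add: s_def)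
  have "cprob M f2 ?Y 1 / (1 - \<gamma>) = (1 - \<alpha>1) * N2 / m"
    unfolding cprob_Y[OF prob_space_P2] cprob_I N2_def[symmetric] using \<gamma> m
    by (simp add: t_def field_simps)
  also have "\<dots> \<le> N2 / m"
    using N \<alpha>1 m by (intro divide_right_mono mult_left_le_one_le) auto
  also have "\<dots> \<le> \<epsilon> * (m / p1) / m"
  proof -
    have "p1 * N1 \<le> m"
      unfolding m_eq using p2 N by simp
    then have "N1 \<le> m / p1"
      using p1 by (simp add: pos_le_divide_eq mult.commute)
    then have "\<epsilon> * N1 \<le> \<epsilon> * (m / p1)"
      using \<epsilon> by (intro mult_left_mono) auto
    then show ?thesis
      using N2_le m by (intro divide_right_mono) auto
  qed
  also have "\<dots> = \<epsilon> / p1"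
    using m by simp
  finally show ?thesis
    using indecision type_I cl unfolding feasible_def by blast
qed

lemma risk_le:
  assumes "\<gamma> < 1" "feasible \<gamma> Y"
  shows "risk \<gamma> \<le> cprob M f2 Y 1 / (1 - \<gamma>)"
  unfolding risk_eq_Inf
proof (rule cInf_lower)
  show "bdd_below {cprob M f2 Y 1 / (1 - \<gamma>) | Y. feasible \<gamma> Y}"
    using assms(1) by (intro bdd_belowI[of _ 0]) (auto simp: cprob_nonneg)
qed (use assms(2) in blast)

lemma risk_nonneg:
  assumes "0 \<le> \<gamma>" "\<gamma> < 1"
  shows "0 \<le> risk \<gamma>"
  unfolding risk_eq_Inf
  using feasible_exists[OF assms] assms(2) by (intro cInf_greatest) (auto simp: cprob_nonneg)

lemma risk_antimono:
  assumes \<gamma>: "0 \<le> \<gamma>" "\<gamma> \<le> \<gamma>'" "\<gamma>' < 1"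
  shows "risk \<gamma>' \<le> risk \<gamma>"
  unfolding risk_eq_Inf[of \<gamma>]
proof (rule cInf_greatest)
  show "{cprob M f2 Y 1 / (1 - \<gamma>) | Y. feasible \<gamma> Y} \<noteq> {}"
    using feasible_exists \<gamma> by simp
  fix r assume "r \<in> {cprob M f2 Y 1 / (1 - \<gamma>) | Y. feasible \<gamma> Y}"
  then obtain Y where r: "r = cprob M f2 Y 1 / (1 - \<gamma>)" and Y: "feasible \<gamma> Y"
    by blast
  obtain Y' where "feasible \<gamma>' Y'" "cprob M f2 Y' 1 / (1 - \<gamma>') = r"
    using feasible_raise_indecision[OF \<gamma> Y] r by blast
  then show "risk \<gamma>' \<le> r"
    using risk_le \<gamma>(3) by metis
qed

lemma risk_lower_indecision:
  assumes \<gamma>: "0 \<le> \<gamma>" "\<gamma> < \<gamma>'" "\<gamma>' < 1"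
  shows "(1 - \<gamma>) * risk \<gamma> \<le> (1 - \<gamma>') * risk \<gamma>' + (\<gamma>' - \<gamma>) / p2"
proof -
  let ?d = "(\<gamma>' - \<gamma>) / p2"
  have "((1 - \<gamma>) * risk \<gamma> - ?d) / (1 - \<gamma>') \<le> risk \<gamma>'"
    unfolding risk_eq_Inf[of \<gamma>']
  proof (rule cInf_greatest)
    show "{cprob M f2 Y 1 / (1 - \<gamma>') | Y. feasible \<gamma>' Y} \<noteq> {}"
      using feasible_exists \<gamma> by simp
    fix r assume "r \<in> {cprob M f2 Y 1 / (1 - \<gamma>') | Y. feasible \<gamma>' Y}"
    then obtain Y where r: "r = cprob M f2 Y 1 / (1 - \<gamma>')" and Y: "feasible \<gamma>' Y"
      by blast
    obtain Y' where Y': "feasible \<gamma> Y'" "cprob M f2 Y' 1 \<le> cprob M f2 Y 1 + ?d"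
      using feasible_lower_indecision[OF \<gamma> Y] by blast
    have "(1 - \<gamma>) * risk \<gamma> \<le> cprob M f2 Y' 1"
      using risk_le[OF _ Y'(1)] \<gamma> by (simp add: field_simps)
    then show "((1 - \<gamma>) * risk \<gamma> - ?d) / (1 - \<gamma>') \<le> r"
      unfolding r using Y'(2) \<gamma> by (intro divide_right_mono) auto
  qed
  then show ?thesis
    using \<gamma> by (simp add: field_simps)
qed

lemma risk_diff_le:
  assumes \<gamma>: "0 \<le> \<gamma>" "\<gamma> \<le> \<gamma>'" "\<gamma>' < 1"
  shows "risk \<gamma> - risk \<gamma>' \<le> (\<gamma>' - \<gamma>) / (p2 * (1 - \<gamma>))"
proof (cases "\<gamma> = \<gamma>'")
  case False
  then have "\<gamma> < \<gamma>'"
    using \<gamma> by simp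
  have "(1 - \<gamma>') * risk \<gamma>' \<le> (1 - \<gamma>) * risk \<gamma>'"
    using risk_nonneg[of \<gamma>'] \<gamma> by (intro mult_right_mono) auto
  then have "(1 - \<gamma>) * (risk \<gamma> - risk \<gamma>') \<le> (\<gamma>' - \<gamma>) / p2"
    using risk_lower_indecision[OF \<gamma>(1) \<open>\<gamma> < \<gamma>'\<close> \<gamma>(3)] by (simp add: algebra_simps)
  then show ?thesis
    using \<gamma> p2 by (simp add: field_simps)
qed simp

lemma risk_dist_le:
  assumes "x \<in> {0..<1}" "y \<in> {0..<1}"
  shows "dist (risk y) (risk x) \<le> dist y x / (p2 * (1 - x))"
proof (cases "x \<le> y")
  case True
  then show ?thesis
    using assms risk_antimono[of x y] risk_diff_le[of x y] by (simp add: dist_real_def)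
next
  case False
  have "(x - y) / (p2 * (1 - y)) \<le> (x - y) / (p2 * (1 - x))"
    using assms False p2 by (intro divide_left_mono mult_left_mono mult_pos_pos) auto
  then show ?thesis
    using assms False risk_antimono[of y x] risk_diff_le[of y x] by (simp add: dist_real_def)
qed

lemma continuous_on_risk: "continuous_on {0..<1} risk"
  unfolding continuous_on_iff
proof (intro ballI allI impI)
  fix x e :: real assume x: "x \<in> {0..<1}" and e: "0 < e"
  have pos: "0 < p2 * (1 - x)"
    using p2 x by simp
  show "\<exists>d>0. \<forall>y\<in>{0..<1}. dist y x < d \<longrightarrow> dist (risk y) (risk x) < e"
  proof (intro exI[of _ "e * (p2 * (1 - x))"] conjI ballI impI)
    fix y assume "y \<in> {0..<1}" "dist y x < e * (p2 * (1 - x))"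
    then show "dist (risk y) (risk x) < e"
      using risk_dist_le[OF x] pos by (smt (verit) pos_divide_less_eq)
  qed (use e pos in simp)
qed

lemma risk_tendsto_0:
  assumes "\<And>\<epsilon>. 0 < \<epsilon> \<Longrightarrow>
    0 < measure (density M (\<lambda>x. ennreal (p1 * f1 x + p2 * f2 x))) {x \<in> space M. f2 x \<le> \<epsilon> * f1 x}"
  shows "(risk \<longlongrightarrow> 0) (at_left 1)"
  unfolding tendsto_iff
proof (intro allI impI)
  fix e :: real assume e: "0 < e"
  define \<epsilon> where "\<epsilon> = e * p1 / 2"
  define m where "m = measure (density M (\<lambda>x. ennreal (p1 * f1 x + p2 * f2 x))) {x \<in> space M. f2 x \<le> \<epsilon> * f1 x}"
  have \<epsilon>: "0 < \<epsilon>"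
    using e p1 by (simp add: \<epsilon>_def)
  then have m: "0 < m"
    using assms by (simp add: m_def)
  have "eventually (\<lambda>\<gamma>. \<gamma> \<in> {max 0 (1 - m)<..<1}) (at_left (1::real))"
    using m by (intro eventually_at_left_real) simp
  then show "eventually (\<lambda>\<gamma>. dist (risk \<gamma>) 0 < e) (at_left 1)"
  proof (rule eventually_mono)
    fix \<gamma> assume \<gamma>: "\<gamma> \<in> {max 0 (1 - m)<..<1}"
    obtain Y where Y: "feasible \<gamma> Y" "cprob M f2 Y 1 / (1 - \<gamma>) \<le> \<epsilon> / p1"
      using feasible_threshold[OF \<epsilon>, of \<gamma>] m \<gamma> unfolding m_def by auto
    have "\<epsilon> / p1 = e / 2"
      using p1 by (simp add: \<epsilon>_def)
    moreover have "risk \<gamma> \<le> \<epsilon> / p1"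
      using risk_le[OF _ Y(1)] Y(2) \<gamma> by force
    ultimately have "risk \<gamma> \<le> e / 2"
      by linarith
    then show "dist (risk \<gamma>) 0 < e"
      using risk_nonneg[of \<gamma>] \<gamma> e by (simp add: dist_real_def)
  qed
qed

end

theorem proposition2:
  fixes M :: "'a measure" and f1 f2 :: "'a \<Rightarrow> real" and p1 p2 \<alpha>1 :: real
  assumes "sigma_finite_measure M"
    and "f1 \<in> borel_measurable M" and "\<And>x. x \<in> space M \<Longrightarrow> f1 x \<ge> 0"
    and "integrable M f1" and "integral\<^sup>L M f1 = 1"
    and "f2 \<in> borel_measurable M" and "\<And>x. x \<in> space M \<Longrightarrow> f2 x \<ge> 0"
    and "integrable M f2" and "integral\<^sup>L M f2 = 1"
    and "density M (\<lambda>x. ennreal (f1 x)) \<noteq> density M (\<lambda>x. ennreal (f2 x))"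
    and "p1 > 0" and "p2 > 0" and "p1 + p2 = 1"
    and "0 \<le> \<alpha>1" and "\<alpha>1 \<le> 1"
  shows "continuous_on {0..<1} (optP M p1 p2 f1 f2 \<alpha>1)
         \<and> (\<forall>\<gamma> \<gamma>'. 0 \<le> \<gamma> \<and> \<gamma> \<le> \<gamma>' \<and> \<gamma>' < 1 \<longrightarrow>
               optP M p1 p2 f1 f2 \<alpha>1 \<gamma>' \<le> optP M p1 p2 f1 f2 \<alpha>1 \<gamma>)
         \<and> ((\<forall>\<epsilon>>0. measure (density M (\<lambda>x. ennreal (p1 * f1 x + p2 * f2 x)))
                          {x \<in> space M. f2 x \<le> \<epsilon> * f1 x} > 0)
             \<longrightarrow> (optP M p1 p2 f1 f2 \<alpha>1 \<longlongrightarrow> 0) (at_left 1))"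
proof -
  interpret two_class_problem M f1 f2 p1 p2 \<alpha>1
    using assms by unfold_locales auto
  show ?thesis
    using continuous_on_risk risk_antimono risk_tendsto_0 by blast
qed

end
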